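(* Let $\ell>1$ be an odd integer. There exists $N_\ell\in\mathbb{N}$ such that, with the relation $\sim$ defined using $N=N_\ell$, the following holds. One can associate to each interval $J\subset\mathbb{R}_+$ a parallelogram $R(J)\subset\mathbb{R}^2$ such that $S_\ell(\tau,\tau')\subset R(\tau+\tau')$ for all dyadic intervals $\tau\sim\tau'$ in $\mathbb{R}_+$; moreover there exist $\beta_\ell>0$ and $\widetilde C_\ell\in\mathbb{N}$ such that for every pair of dyadic intervals $\tau\sim\tau'$ in $\mathbb{R}_+$, $$\#\{(\tau_1,\tau_1'):\ \tau_1\sim\tau_1'\subset\mathbb{R}_+ \text{ dyadic},\ (1+\beta_\ell)R(\tau+\tau')\cap(1+\beta_\ell)R(\tau_1+\tau_1')\ne\emptyset\}\le\widetilde C_\ell .$$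
   Context: $S_\ell(\tau,\tau'):=\{(\xi+\xi',\xi^\ell+(\xi')^\ell):\xi\in\tau,\xi'\in\tau'\}$. For a parallelogram $R$ and $\beta>0$, $(1+\beta)R$ is its dilate by factor $1+\beta$ about its center. A dyadic interval is $[k,k+1)2^j$ with $k,j\in\mathbb{Z}$, with length $|\tau|$ and center $c(\tau)$; $m$-parent = dyadic interval of length $2^m|\tau|$ containing $\tau$; two intervals are adjacent if they have equal length and share an endpoint; $\tau\sim\tau'$ means $|\tau|=|\tau'|$, the $m$-parents of $\tau,\tau'$ are not adjacent for $m=0,\dots,N-1$, and their $N$-parents are adjacent. $\tau+\tau'$ is the Minkowski sum. *)

theory Defs
  imports "HOL-Analysis.Analysis"
begin

definition dint :: "int \<Rightarrow> int \<Rightarrow> real set" where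
  "dint k j = {x. of_int k * 2 powr of_int j \<le> x \<and> x < (of_int k + 1) * 2 powr of_int j}"

definition dyadic :: "real set \<Rightarrow> bool" where
  "dyadic I \<longleftrightarrow> (\<exists>k j. I = dint k j)"

text \<open>The m-parent of dint k j is the dyadic interval of length 2^m 2^j containing it,
  namely dint (k div 2^m) (j+m).\<close>
definition dparent :: "nat \<Rightarrow> int \<Rightarrow> int \<Rightarrow> real set" where
  "dparent m k j = dint (k div 2 ^ m) (j + int m)"

definition adjacent :: "real set \<Rightarrow> real set \<Rightarrow> bool" where
  "adjacent I J \<longleftrightarrow> (\<exists>a b j. I = dint a j \<and> J = dint b j \<and> \<bar>a - b\<bar> = 1)"

definition dsim :: "nat \<Rightarrow> real set \<Rightarrow> real set \<Rightarrow> bool" where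
  "dsim N \<tau> \<tau>' \<longleftrightarrow> (\<exists>k k' j. \<tau> = dint k j \<and> \<tau>' = dint k' j \<and>
     (\<forall>m<N. \<not> adjacent (dparent m k j) (dparent m k' j)) \<and>
     adjacent (dparent N k j) (dparent N k' j))"

definition msum :: "real set \<Rightarrow> real set \<Rightarrow> real set" where
  "msum A B = {x + y | x y. x \<in> A \<and> y \<in> B}"

definition Sl :: "nat \<Rightarrow> real set \<Rightarrow> real set \<Rightarrow> (real \<times> real) set" where
  "Sl l \<tau> \<tau>' = {(\<xi> + \<xi>', \<xi> ^ l + \<xi>' ^ l) | \<xi> \<xi>'. \<xi> \<in> \<tau> \<and> \<xi>' \<in> \<tau>'}"

definition pgram :: "real \<times> real \<Rightarrow> real \<times> real \<Rightarrow> real \<times> real \<Rightarrow> (real \<times> real) set" where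
  "pgram c u v = {c + s *\<^sub>R u + t *\<^sub>R v | s t. \<bar>s\<bar> \<le> 1 \<and> \<bar>t\<bar> \<le> 1}"

definition nondeg :: "real \<times> real \<Rightarrow> real \<times> real \<Rightarrow> bool" where
  "nondeg u v \<longleftrightarrow> fst u * snd v - snd u * fst v \<noteq> 0"

definition dil_pgram :: "real \<Rightarrow> real \<times> real \<Rightarrow> real \<times> real \<Rightarrow> real \<times> real \<Rightarrow> (real \<times> real) set" where
  "dil_pgram \<beta> c u v = pgram c ((1 + \<beta>) *\<^sub>R u) ((1 + \<beta>) *\<^sub>R v)"

end

theory Submission
  imports Defs
begin

text \<open>
  Write \<open>x = \<xi> + \<xi>'\<close> and \<open>\<xi> - \<xi>' = w x\<close>. Then \<open>\<xi>^l + \<xi>'^l = (x/2)^l ((1+w)^l + (1-w)^l)\<close>,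
  and \<open>2 w\<^sup>2 \<le> (1+w)^l + (1-w)^l - 2 \<le> 4^l w\<^sup>2\<close>. For \<open>\<tau> \<sim> \<tau>'\<close> with \<open>N = l + 6\<close> the
  indices satisfy \<open>P < \<bar>k - k'\<bar> < 4 P\<close> with \<open>P = 2^(l+5)\<close>, so \<open>\<bar>w\<bar>\<close> is comparable to
  \<open>P \<mu>\<close>, where \<open>\<mu>\<close> is the relative half-length of \<open>\<tau> + \<tau>'\<close>. Measured from the tangent line of
  the diagonal curve \<open>x \<mapsto> 2 (x/2)^l\<close> at the midpoint of \<open>\<tau> + \<tau>'\<close>, the set \<open>S_l(\<tau>, \<tau>')\<close>
  therefore lies in a strip of relative height between \<open>(P \<mu>)\<^sup>2/32\<close> and \<open>101 \<cdot> 4^l (P \<mu>)\<^sup>2\<close>;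
  over \<open>\<tau> + \<tau>'\<close> this strip is the parallelogram \<open>R(\<tau> + \<tau>')\<close>.

  A slight dilate of \<open>R(\<tau> + \<tau>')\<close> still lies above the diagonal curve at relative height
  comparable to \<open>(P \<mu>)\<^sup>2\<close>. Two dilates can therefore only meet if their relative lengths agree up
  to a factor \<open>2^O(l)\<close>; this confines the scale of \<open>\<tau>\<^sub>1\<close> to \<open>O(l)\<close> dyadic levels and its
  position to \<open>O(2^l)\<close> intervals around the given one, which bounds the number of overlaps.
\<close>

section \<open>Elementary power estimates\<close>

lemma sym_power_sum_bounds:
  fixes w :: real
  assumes "\<bar>w\<bar> \<le> 1"
  shows "2 \<le> (1+w)^n + (1-w)^n \<and> (1+w)^n + (1-w)^n \<le> 2 + 4^n * w^2
       \<and> 0 \<le> w * ((1+w)^n - (1-w)^n) \<and> w * ((1+w)^n - (1-w)^n) \<le> 4^n * w^2"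
proof (induction n)
  case 0
  then show ?case by simp
next
  case (Suc n)
  define f where "f = (1+w)^n + (1-w)^n"
  define g where "g = (1+w)^n - (1-w)^n"
  have f_Suc: "(1+w)^Suc n + (1-w)^Suc n = f + w*g"
    unfolding f_def g_def by (simp add: algebra_simps)
  have g_Suc: "w*((1+w)^Suc n - (1-w)^Suc n) = w*g + w^2*f"
    unfolding f_def g_def by (simp add: algebra_simps power2_eq_square)
  have IH: "2 \<le> f" "f \<le> 2 + 4^n*w^2" "0 \<le> w*g" "w*g \<le> 4^n*w^2"
    using Suc unfolding f_def g_def by auto
  have w2: "w^2 \<le> 1" using assms by (simp add: abs_square_le_1)
  have "w^2*f \<le> w^2*(2 + 4^n*w^2)" using IH(2) by (simp add: mult_left_mono)
  also have "\<dots> \<le> w^2*(2 + 4^n)" using w2 by (intro mult_left_mono) (auto intro: mult_left_le)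
  finally have "w^2*f \<le> w^2*(2 + 4^n)" .
  moreover have "0 \<le> w^2*f" using IH(1) by simp
  moreover have "w^2*2 \<le> w^2*(2*4^n)" by (intro mult_left_mono) auto
  ultimately show ?case unfolding f_Suc g_Suc using IH by (auto simp: algebra_simps)
qed

lemma sym_power_sum_lower:
  fixes w :: real
  assumes "\<bar>w\<bar> \<le> 1" "2 \<le> n"
  shows "2 + 2*w^2 \<le> (1+w)^n + (1-w)^n"
  using assms(2)
proof (induction n rule: nat_induct_at_least)
  case base
  then show ?case by (simp add: power2_eq_square algebra_simps)
next
  case (Suc n)
  have "(1+w)^Suc n + (1-w)^Suc n = ((1+w)^n + (1-w)^n) + w*((1+w)^n - (1-w)^n)"
    by (simp add: algebra_simps)
  then show ?case using Suc sym_power_sum_bounds[OF assms(1), of n] by linarith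
qed

lemma bernoulli_remainder_bounds:
  fixes v :: real
  assumes "\<bar>v\<bar> \<le> 1"
  shows "0 \<le> (1+v)^n - 1 - real n * v \<and> (1+v)^n - 1 - real n * v \<le> 4^n * v^2"
proof (induction n)
  case 0
  then show ?case by simp
next
  case (Suc n)
  define r where "r = (1+v)^n - 1 - real n * v"
  have r_Suc: "(1+v)^Suc n - 1 - real (Suc n) * v = (1+v) * r + n * v^2"
    unfolding r_def by (simp add: algebra_simps power2_eq_square)
  have IH: "0 \<le> r" "r \<le> 4^n * v^2" using Suc unfolding r_def by auto
  have v: "0 \<le> 1 + v" "1 + v \<le> 2" using assms by auto
  have "(1+v)*r \<le> 2*(4^n * v^2)" using IH v by (intro mult_mono) auto
  moreover have "real n * v^2 \<le> 4^n * v^2"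
  proof -
    have "real n \<le> 2^n" using less_exp[of n] by (metis less_imp_le of_nat_le_iff of_nat_numeral of_nat_power)
    also have "(2::real)^n \<le> 4^n" by (rule power_mono) auto
    finally show ?thesis by (simp add: mult_right_mono)
  qed
  ultimately show ?case unfolding r_Suc using IH v by auto
qed

lemma power_near_one:
  fixes v \<mu> :: real
  assumes "\<bar>v\<bar> \<le> 2*\<mu>" "4*real l*\<mu> \<le> 1" "32*4^l*\<mu>^2 \<le> 1"
  shows "1/2 \<le> (1+v)^l" "(1+v)^l \<le> 2" "0 \<le> (1+v)^l - 1 - real l * v"
        "(1+v)^l - 1 - real l * v \<le> 4*4^l*\<mu>^2"
proof -
  have "32*\<mu>^2 \<le> 32*4^l*\<mu>^2" by (simp add: mult_right_mono)
  moreover have "(2*\<mu>)^2 = 4*\<mu>^2" "(1/2::real)^2 = 1/4" by (simp_all add: power2_eq_square)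
  ultimately have "(2*\<mu>)^2 \<le> (1/2)^2" using assms(3) by linarith
  then have "2*\<mu> \<le> 1/2" by (rule power2_le_imp_le) simp
  then have v1: "\<bar>v\<bar> \<le> 1" using assms(1) by simp
  note R = bernoulli_remainder_bounds[OF v1, of l]
  have "\<bar>v\<bar>^2 \<le> (2*\<mu>)^2" using assms(1) by (intro power_mono) auto
  then have "v^2 \<le> (2*\<mu>)^2" by simp
  then have "4^l* v^2 \<le> 4^l*(2*\<mu>)^2" by simp
  also have "\<dots> = 4*4^l*\<mu>^2" by (simp add: power_mult_distrib)
  finally have "4^l* v^2 \<le> 4*4^l*\<mu>^2" .
  then have "(1+v)^l - 1 - real l * v \<le> 4*4^l*\<mu>^2" using R by linarith
  moreover have "\<bar>real l * v\<bar> \<le> 1/2"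
  proof -
    have "\<bar>real l * v\<bar> = real l * \<bar>v\<bar>" by (simp add: abs_mult)
    also have "\<dots> \<le> real l * (2*\<mu>)" using assms(1) by (simp add: mult_left_mono)
    finally show ?thesis using assms(2) by simp
  qed
  moreover have "4*4^l*\<mu>^2 \<le> 1/8" using assms(3) by simp
  ultimately show "1/2 \<le> (1+v)^l" "(1+v)^l \<le> 2" "0 \<le> (1+v)^l - 1 - real l * v"
        "(1+v)^l - 1 - real l * v \<le> 4*4^l*\<mu>^2" using R by (auto simp: abs_le_iff)
qed


section \<open>Points of \<open>S_l\<close> relative to the diagonal curve\<close>

text \<open>\<open>diag_curve l x\<close> is the value of \<open>\<xi>^l + \<xi>'^l\<close> at \<open>\<xi> = \<xi>' = x/2\<close>; \<open>tangent_dev l c p\<close> is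
  the height of \<open>p\<close> above the tangent line of this curve at \<open>c\<close>, relative to \<open>diag_curve l c\<close>.\<close>

definition diag_curve :: "nat \<Rightarrow> real \<Rightarrow> real" where
  "diag_curve l x = 2*(x/2)^l"

definition tangent_dev :: "nat \<Rightarrow> real \<Rightarrow> real \<times> real \<Rightarrow> real" where
  "tangent_dev l c p = snd p / diag_curve l c - 1 - real l * ((fst p - c)/c)"

lemma tangent_dev_curve_point:
  fixes \<xi> \<xi>' c :: real
  assumes "0 < \<xi> + \<xi>'" "0 < c"
  defines "v \<equiv> (\<xi> + \<xi>' - c)/c" and "w \<equiv> (\<xi> - \<xi>')/(\<xi> + \<xi>')"
  shows "tangent_dev l c (\<xi> + \<xi>', \<xi>^l + \<xi>'^l)
       = ((1+v)^l - 1 - real l * v) + (1+v)^l * (((1+w)^l + (1-w)^l - 2)/2)"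
proof -
  define z where "z = (\<xi> + \<xi>')/2"
  define F where "F = (1+w)^l + (1-w)^l"
  define A where "A = (c/2)^l"
  have zw: "z*w = (\<xi> - \<xi>')/2" using assms(1) unfolding z_def w_def by (simp add: field_simps)
  have "\<xi> = z + z*w" "\<xi>' = z - z*w" unfolding zw unfolding z_def by (simp_all add: field_simps)
  then have "\<xi> = z*(1+w)" "\<xi>' = z*(1-w)" by (simp_all add: algebra_simps)
  then have "\<xi>^l + \<xi>'^l = (z*(1+w))^l + (z*(1-w))^l" by (simp only:)
  also have "\<dots> = z^l * F" unfolding F_def power_mult_distrib by (rule distrib_left[symmetric])
  also have "z = (c/2)*(1+v)" using assms(2) unfolding z_def v_def by (simp add: field_simps)
  finally have sum: "\<xi>^l + \<xi>'^l = A * ((1+v)^l * F)" unfolding A_def power_mult_distrib by simp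
  have "0 < A" using assms(2) unfolding A_def by simp
  then have "tangent_dev l c (\<xi> + \<xi>', \<xi>^l + \<xi>'^l) = (1+v)^l * F/2 - 1 - real l * v"
    unfolding tangent_dev_def diag_curve_def A_def[symmetric] sum v_def by simp
  then show ?thesis unfolding F_def by (simp add: field_simps)
qed

lemma asymmetry_bounds:
  fixes P h k k' \<xi> \<xi>' :: real
  assumes "8 \<le> P" "0 < h" "0 \<le> k" "0 \<le> k'" "P \<le> \<bar>k - k'\<bar>" "\<bar>k - k'\<bar> \<le> 4*P"
    and "k*h \<le> \<xi>" "\<xi> \<le> (k+1)*h" "k'*h \<le> \<xi>'" "\<xi>' \<le> (k'+1)*h"
  defines "\<mu> \<equiv> 1/(k+k'+1)"
  shows "P*\<mu>/4 \<le> \<bar>(\<xi> - \<xi>')/(\<xi> + \<xi>')\<bar>" "\<bar>(\<xi> - \<xi>')/(\<xi> + \<xi>')\<bar> \<le> 10*P*\<mu>"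
proof -
  define s where "s = k + k'"
  have sP: "P \<le> s" using assms(3-5) unfolding s_def by linarith
  have x: "s*h \<le> \<xi> + \<xi>'" "\<xi> + \<xi>' \<le> (s+2)*h"
    using assms(7-10) unfolding s_def by (auto simp: algebra_simps)
  have x0: "0 < \<xi> + \<xi>'" using x(1) sP assms(1,2) by (smt (verit) mult_pos_pos)
  define a where "a = \<xi> - \<xi>'"
  define b where "b = (k - k')*h"
  have "\<bar>a - b\<bar> \<le> h" using assms(7-10) unfolding a_def b_def by (simp add: abs_le_iff algebra_simps)
  then have "\<bar>\<bar>a\<bar> - \<bar>b\<bar>\<bar> \<le> h" using abs_triangle_ineq3[of a b] by linarith
  then have "\<bar>b\<bar> - h \<le> \<bar>a\<bar>" "\<bar>a\<bar> \<le> \<bar>b\<bar> + h" using abs_le_D1 abs_le_D2 by fastforce+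
  moreover have "\<bar>b\<bar> = \<bar>k - k'\<bar>*h" using assms(2) unfolding b_def by (simp add: abs_mult)
  ultimately have d: "(\<bar>k - k'\<bar> - 1)*h \<le> \<bar>\<xi> - \<xi>'\<bar>" "\<bar>\<xi> - \<xi>'\<bar> \<le> (\<bar>k - k'\<bar> + 1)*h"
    unfolding a_def[symmetric] left_diff_distrib distrib_right by simp_all
  have s1: "0 < s + 1" using sP assms(1) by linarith
  have eq: "\<bar>(\<xi> - \<xi>')/(\<xi> + \<xi>')\<bar> = \<bar>\<xi> - \<xi>'\<bar>/(\<xi> + \<xi>')" using x0 by (simp add: abs_div)
  have "P/(4*(s+1)) * (\<xi> + \<xi>') \<le> P/(4*(s+1)) * (2*(s+1)*h)"
    using x(2) sP assms(1,2) by (intro mult_left_mono order.trans[OF x(2)] mult_right_mono) auto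
  also have "\<dots> = (P/2)*h" using s1 by (simp add: field_simps)
  also have "\<dots> \<le> (\<bar>k - k'\<bar> - 1)*h" using assms(1,2,5) by (intro mult_right_mono) auto
  finally have "P/(4*(s+1)) * (\<xi> + \<xi>') \<le> \<bar>\<xi> - \<xi>'\<bar>" using d(1) by linarith
  moreover have "P*\<mu>/4 = P/(4*(s+1))" unfolding \<mu>_def s_def by simp
  ultimately show "P*\<mu>/4 \<le> \<bar>(\<xi> - \<xi>')/(\<xi> + \<xi>')\<bar>"
    unfolding eq by (simp only: pos_le_divide_eq[OF x0])
  have "8*P \<le> P * s" "8 * s \<le> P * s" using sP assms(1) by (simp_all add: mult_right_mono mult_left_mono)
  moreover have "(4*P + 1)*(s+1) = 4*(P * s) + 4*P + s + 1" "10*P * s = 10*(P * s)" by (simp_all add: algebra_simps)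
  ultimately have "(4*P + 1)*(s+1) \<le> 10*P * s" using assms(1) by linarith
  then have "4*P + 1 \<le> 10*P * s/(s+1)" using s1 by (simp add: pos_le_divide_eq)
  then have "(\<bar>k - k'\<bar> + 1)*h \<le> 10*P * s/(s+1) * h" using assms(2,6) by (intro mult_right_mono) auto
  also have "\<dots> = 10*P/(s+1) * (s*h)" by simp
  also have "\<dots> \<le> 10*P/(s+1) * (\<xi> + \<xi>')" using x(1) sP assms(1) by (intro mult_left_mono) auto
  finally have "\<bar>\<xi> - \<xi>'\<bar> \<le> 10*P/(s+1) * (\<xi> + \<xi>')" using d(2) by linarith
  moreover have "10*P*\<mu> = 10*P/(s+1)" unfolding \<mu>_def s_def by simp
  ultimately show "\<bar>(\<xi> - \<xi>')/(\<xi> + \<xi>')\<bar> \<le> 10*P*\<mu>"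
    unfolding eq by (simp only: pos_divide_le_eq[OF x0])
qed

lemma small_rel_len:
  fixes P \<mu> :: real
  assumes "4*real l \<le> P" "1024*4^l \<le> P^2" "0 < \<mu>" "P*\<mu> \<le> 1"
  shows "4*real l*\<mu> \<le> 1" "32*4^l*\<mu>^2 \<le> 1"
proof -
  have "4*real l*\<mu> \<le> P*\<mu>" using assms(1,3) by (intro mult_right_mono) auto
  then show "4*real l*\<mu> \<le> 1" using assms(4) by linarith
  have "(P*\<mu>)^2 \<le> 1" using assms(3,4) assms(1) by (simp add: abs_square_le_1)
  moreover have "1024*4^l*\<mu>^2 \<le> P^2*\<mu>^2" using assms(2) by (simp add: mult_right_mono)
  ultimately show "32*4^l*\<mu>^2 \<le> 1" by (simp add: power_mult_distrib)
qed

lemma tangent_dev_curve_bounds: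
  fixes P h k k' \<xi> \<xi>' :: real
  assumes l: "2 \<le> l" and P: "4*real l \<le> P" "1024*4^l \<le> P^2"
    and "0 < h" "0 \<le> k" "0 \<le> k'" "P \<le> \<bar>k - k'\<bar>" "\<bar>k - k'\<bar> \<le> 4*P"
    and \<xi>: "k*h \<le> \<xi>" "\<xi> \<le> (k+1)*h" "k'*h \<le> \<xi>'" "\<xi>' \<le> (k'+1)*h"
  defines "c \<equiv> (k+k'+1)*h" and "\<mu> \<equiv> 1/(k+k'+1)"
  shows "\<bar>\<xi> + \<xi>' - c\<bar> \<le> h"
    and "(P*\<mu>)^2/32 \<le> tangent_dev l c (\<xi> + \<xi>', \<xi>^l + \<xi>'^l)"
    and "tangent_dev l c (\<xi> + \<xi>', \<xi>^l + \<xi>'^l) \<le> 101*4^l*(P*\<mu>)^2"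
proof -
  have P8: "8 \<le> P" using P(1) l by linarith
  have s: "P \<le> k + k'" using assms(5-7) by linarith
  have \<mu>0: "0 < \<mu>" using s P8 unfolding \<mu>_def by simp
  have c0: "0 < c" using s P8 \<open>0 < h\<close> unfolding c_def by simp
  have h: "h = \<mu>*c" unfolding c_def \<mu>_def using s P8 by simp
  have "P*\<mu> \<le> (k+k'+1)*\<mu>" using s \<mu>0 by (intro mult_right_mono) auto
  then have P\<mu>: "P*\<mu> \<le> 1" using s P8 unfolding \<mu>_def by simp
  show x: "\<bar>\<xi> + \<xi>' - c\<bar> \<le> h" using \<xi> unfolding c_def by (auto simp: abs_le_iff algebra_simps)
  define v where "v = (\<xi> + \<xi>' - c)/c"
  define w where "w = (\<xi> - \<xi>')/(\<xi> + \<xi>')"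
  have "\<bar>v\<bar> \<le> \<mu>" using x c0 unfolding v_def h by (simp add: abs_div divide_le_eq)
  then have "\<bar>v\<bar> \<le> 2*\<mu>" using \<mu>0 by simp
  note pow = power_near_one[OF this small_rel_len[OF P \<mu>0 P\<mu>]]
  have \<xi>0: "0 \<le> \<xi>" "0 \<le> \<xi>'" using \<xi>(1,3) assms(4-6) by (metis mult_nonneg_nonneg less_imp_le order.trans)+
  have "0 < (k+k')*h" using s P8 assms(4) by simp
  then have x0: "0 < \<xi> + \<xi>'" using \<xi>(1,3) by (simp add: distrib_right)
  have w: "P*\<mu>/4 \<le> \<bar>w\<bar>" "\<bar>w\<bar> \<le> 10*P*\<mu>"
    using asymmetry_bounds[OF P8 assms(4-8) \<xi>] unfolding w_def \<mu>_def by simp_all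
  have "\<bar>\<xi> - \<xi>'\<bar> \<le> \<bar>\<xi> + \<xi>'\<bar>" using \<xi>0 by simp
  then have w1: "\<bar>w\<bar> \<le> 1" using x0 unfolding w_def abs_div by simp
  have "(P*\<mu>/4)^2 \<le> \<bar>w\<bar>^2" using w(1) P8 \<mu>0 by (intro power_mono) auto
  then have w2lo: "(P*\<mu>)^2/16 \<le> w^2" by (simp add: power_divide)
  have "\<bar>w\<bar>^2 \<le> (10*P*\<mu>)^2" using w(2) by (intro power_mono) auto
  then have w2hi: "w^2 \<le> 100*(P*\<mu>)^2" by (simp add: power_mult_distrib)
  define F where "F = (1+w)^l + (1-w)^l"
  have F: "2*w^2 \<le> F - 2" "F - 2 \<le> 4^l*w^2"
    using sym_power_sum_lower[OF w1 l] sym_power_sum_bounds[OF w1, of l] unfolding F_def by auto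
  have F0: "0 \<le> F - 2" using F(1) zero_le_power2[of w] by linarith
  have dev: "tangent_dev l c (\<xi> + \<xi>', \<xi>^l + \<xi>'^l) = ((1+v)^l - 1 - real l * v) + (1+v)^l * ((F - 2)/2)"
    using tangent_dev_curve_point[OF x0 c0, of l] unfolding v_def w_def F_def by simp
  have "(1/2)*w^2 \<le> (1+v)^l * ((F - 2)/2)" using F(1) F0 pow(1) by (intro mult_mono) auto
  then show "(P*\<mu>)^2/32 \<le> tangent_dev l c (\<xi> + \<xi>', \<xi>^l + \<xi>'^l)" unfolding dev using pow(3) w2lo by linarith
  have "(1+v)^l * ((F - 2)/2) \<le> 2 * (4^l*w^2/2)" using F F0 pow(2) by (intro mult_mono) auto
  also have "\<dots> \<le> 4^l*(100*(P*\<mu>)^2)" using w2hi by simp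
  finally have "(1+v)^l * ((F - 2)/2) \<le> 100*(4^l*(P*\<mu>)^2)" by simp
  moreover have "4*4^l*\<mu>^2 \<le> 4^l*(P*\<mu>)^2"
  proof -
    have "8*8 \<le> P*P" using P8 by (intro mult_mono) auto
    then have "4 \<le> P^2" by (simp add: power2_eq_square)
    then show ?thesis by (simp add: power_mult_distrib mult_right_mono)
  qed
  ultimately show "tangent_dev l c (\<xi> + \<xi>', \<xi>^l + \<xi>'^l) \<le> 101*4^l*(P*\<mu>)^2" unfolding dev using pow(4) by linarith
qed

lemma mem_shear_pgram:
  fixes c1 c2 h a b x y :: real
  assumes "0 < h" "0 < b"
  shows "(x, y) \<in> pgram (c1, c2) (h, a) (0, b) \<longleftrightarrow> \<bar>x - c1\<bar> \<le> h \<and> \<bar>y - c2 - a*(x - c1)/h\<bar> \<le> b"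
proof
  assume "(x, y) \<in> pgram (c1, c2) (h, a) (0, b)"
  then obtain s t where st: "\<bar>s\<bar> \<le> 1" "\<bar>t\<bar> \<le> 1" and "x = c1 + s*h" "y = c2 + s*a + t*b"
    unfolding pgram_def by auto
  then show "\<bar>x - c1\<bar> \<le> h \<and> \<bar>y - c2 - a*(x - c1)/h\<bar> \<le> b"
    using assms by (simp add: abs_mult mult_left_le_one_le)
next
  assume xy: "\<bar>x - c1\<bar> \<le> h \<and> \<bar>y - c2 - a*(x - c1)/h\<bar> \<le> b"
  define s where "s = (x - c1)/h"
  define t where "t = (y - c2 - a*(x - c1)/h)/b"
  have "\<bar>s\<bar> \<le> 1" "\<bar>t\<bar> \<le> 1" using xy assms unfolding s_def t_def by (simp_all add: abs_div)
  moreover have "(x, y) = (c1, c2) + s *\<^sub>R (h, a) + t *\<^sub>R (0, b)"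
    using assms unfolding s_def t_def by (simp add: field_simps)
  ultimately show "(x, y) \<in> pgram (c1, c2) (h, a) (0, b)" unfolding pgram_def by blast
qed

lemma diag_curve_gap_eq:
  fixes c x y :: real
  assumes "0 < c"
  defines "v \<equiv> (x - c)/c"
  shows "diag_curve l x = diag_curve l c * (1+v)^l"
    and "y - diag_curve l x = diag_curve l c * (tangent_dev l c (x, y) - ((1+v)^l - 1 - real l * v))"
proof -
  have "x/2 = (c/2)*(1+v)" using assms(1) unfolding v_def by (simp add: field_simps)
  then show Gx: "diag_curve l x = diag_curve l c * (1+v)^l"
    unfolding diag_curve_def by (simp only: power_mult_distrib mult.assoc)
  have "0 < diag_curve l c" using assms(1) unfolding diag_curve_def by simp
  then have "y = diag_curve l c * (1 + real l * v + tangent_dev l c (x, y))"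
    unfolding tangent_dev_def v_def by (simp add: field_simps)
  then show "y - diag_curve l x = diag_curve l c * (tangent_dev l c (x, y) - ((1+v)^l - 1 - real l * v))"
    unfolding Gx by (simp add: algebra_simps)
qed

lemma dilated_strip_bounds:
  fixes Q \<beta> D :: real
  assumes "0 \<le> Q" "0 \<le> \<beta>" "\<beta> \<le> 1/(8000*4^l)"
    and "\<bar>D - (Q/32 + 101*4^l*Q)/2\<bar> \<le> (1+\<beta>)*((101*4^l*Q - Q/32)/2)"
  shows "Q/32 - Q/128 \<le> D" "D \<le> 101*4^l*Q + Q/128"
proof -
  define H where "H = (101*4^l*Q - Q/32)/2"
  have "1*Q \<le> 4^l*Q" using assms(1) by (intro mult_right_mono) simp_all
  then have "Q/32 \<le> 101*4^l*Q" using assms(1) by (simp add: mult.assoc)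
  then have "0 \<le> H" unfolding H_def by simp
  then have "\<beta>*H \<le> 1/(8000*4^l) * (101*4^l*Q/2)"
    using assms(1-3) unfolding H_def by (intro mult_mono) auto
  also have "\<dots> \<le> Q/128" using assms(1) by simp
  finally have "\<beta>*H \<le> Q/128" .
  moreover have "(1+\<beta>)*H = H + \<beta>*H" "(Q/32 + 101*4^l*Q)/2 - H = Q/32"
    "(Q/32 + 101*4^l*Q)/2 + H = 101*4^l*Q"
    unfolding H_def by (simp_all add: field_simps)
  ultimately show "Q/32 - Q/128 \<le> D" "D \<le> 101*4^l*Q + Q/128"
    using assms(4) unfolding H_def[symmetric] abs_le_iff by linarith+
qed

lemma gap_above_curve_bounds:
  fixes P c h \<beta> x y :: real
  assumes l: "2 \<le> l" and P: "4*real l \<le> P" "1024*4^l \<le> P^2"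
    and c: "0 < c" and h: "0 < h" "P*(h/c) \<le> 1" and \<beta>: "0 \<le> \<beta>" "\<beta> \<le> 1/(8000*4^l)"
  defines "Q \<equiv> (P*(h/c))^2"
  assumes x: "\<bar>x - c\<bar> \<le> (1+\<beta>)*h"
    and dev: "\<bar>tangent_dev l c (x, y) - (Q/32 + 101*4^l*Q)/2\<bar> \<le> (1+\<beta>)*((101*4^l*Q - Q/32)/2)"
  shows "0 < x" "Q/128 * diag_curve l x \<le> y - diag_curve l x"
    "y - diag_curve l x \<le> 204*4^l*Q * diag_curve l x"
proof -
  define \<mu> v G D R where "\<mu> = h/c" and "v = (x - c)/c" and "G = diag_curve l c"
    and "D = tangent_dev l c (x, y)" and "R = (1+v)^l - 1 - real l * v"
  have \<mu>0: "0 < \<mu>" using c h unfolding \<mu>_def by simp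
  note small = small_rel_len[OF P \<mu>0 h(2)[folded \<mu>_def]]
  have "1 \<le> 8000*(4::real)^l" using one_le_power[of "4::real" l] by linarith
  then have "1/(8000*4^l) \<le> (1::real)" by simp
  then have "\<beta> \<le> 1" using \<beta>(2) by linarith
  then have "(1+\<beta>)*h \<le> 2*h" using h by (intro mult_right_mono) auto
  then have v: "\<bar>v\<bar> \<le> 2*\<mu>" using x c unfolding v_def \<mu>_def by (simp add: abs_div divide_le_eq)
  note pow = power_near_one[OF this small]
  have "8*\<mu> \<le> 4*real l*\<mu>" using l \<mu>0 by (intro mult_right_mono) auto
  then have "\<bar>v\<bar> < 1" using v small(1) by linarith
  then show "0 < x" using c unfolding v_def by (simp add: abs_less_iff field_simps)
  have G0: "0 < G" using c unfolding G_def diag_curve_def by simp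
  note Gx = diag_curve_gap_eq(1)[OF c, where l=l and x=x, folded v_def G_def]
  note gap = diag_curve_gap_eq(2)[OF c, where l=l and x=x and y=y, folded v_def G_def D_def, folded R_def]
  have "0 \<le> Q" unfolding Q_def by simp
  have "512*4^l \<le> P^2" using P(2) zero_le_power[of "4::real" l] by linarith
  then have "512*4^l*\<mu>^2 \<le> P^2*\<mu>^2" by (rule mult_right_mono) simp
  then have "4*4^l*\<mu>^2 \<le> Q/128" unfolding Q_def \<mu>_def power_mult_distrib by simp
  then have R: "0 \<le> R" "R \<le> Q/128" using pow(3,4) unfolding R_def by auto
  have "1*Q \<le> 4^l*Q" using \<open>0 \<le> Q\<close> by (intro mult_right_mono) simp_all
  then have "Q/128 \<le> 4^l*Q" using \<open>0 \<le> Q\<close> by linarith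
  then have DR: "Q/64 \<le> D - R" "D - R \<le> 102*4^l*Q"
    using dilated_strip_bounds[OF \<open>0 \<le> Q\<close> \<beta> dev[folded D_def]] R by (simp_all add: mult.assoc)
  have "Q/128 * (G*(1+v)^l) \<le> Q/128 * (G*2)" using pow(2) G0 \<open>0 \<le> Q\<close> by (intro mult_left_mono) auto
  also have "\<dots> \<le> G*(D - R)" using DR(1) G0 by (simp add: mult.commute mult_right_mono)
  finally show "Q/128 * diag_curve l x \<le> y - diag_curve l x" unfolding gap unfolding Gx .
  have "G*(D - R) \<le> (102*4^l*Q*G)*1" using DR(2) G0 by (simp add: mult.commute mult_left_mono)
  also have "\<dots> \<le> (102*4^l*Q*G)*(2*(1+v)^l)" using pow(1) G0 \<open>0 \<le> Q\<close> by (intro mult_left_mono) auto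
  finally show "y - diag_curve l x \<le> 204*4^l*Q * diag_curve l x" unfolding gap unfolding Gx by simp
qed

section \<open>Dyadic intervals\<close>

lemma dint_inj:
  assumes "dint a j = dint b j'"
  shows "a = b \<and> j = j'"
proof -
  have p: "0 < (2::real) powr of_int j" "0 < (2::real) powr of_int j'" by auto
  have "dint a j = {of_int a * 2 powr of_int j ..< (of_int a + 1) * 2 powr of_int j}"
       "dint b j' = {of_int b * 2 powr of_int j' ..< (of_int b + 1) * 2 powr of_int j'}"
    unfolding dint_def by auto
  moreover have "of_int a * 2 powr of_int j < (of_int a + 1) * 2 powr (of_int j::real)"
    "of_int b * 2 powr of_int j' < (of_int b + 1) * 2 powr (of_int j'::real)" using p by simp_all
  ultimately have e: "of_int a * 2 powr of_int j = of_int b * 2 powr (of_int j'::real)"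
    "(of_int a + 1) * 2 powr of_int j = (of_int b + 1) * 2 powr (of_int j'::real)"
    using assms atLeastLessThan_eq_iff by metis+
  then have "(2::real) powr of_int j = 2 powr of_int j'" by (simp add: algebra_simps)
  then have "j = j'" using powr_inj[of 2 "of_int j" "of_int j'"] by simp
  then show ?thesis using e p by simp
qed

lemma adjacent_dint_iff: "adjacent (dint a j) (dint b j) \<longleftrightarrow> \<bar>a - b\<bar> = 1"
  unfolding adjacent_def by (metis dint_inj)

lemma abs_diff_less_of_div_near:
  fixes k k' M :: int
  assumes "0 < M" "\<bar>k div M - k' div M\<bar> \<le> 1"
  shows "\<bar>k - k'\<bar> < 2*M"
proof -
  have "k = M*(k div M) + k mod M" "k' = M*(k' div M) + k' mod M" by simp_all
  moreover have "0 \<le> k mod M" "k mod M < M" "0 \<le> k' mod M" "k' mod M < M" using assms by simp_all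
  moreover have "M*(k div M) - M*(k' div M) = M*(k div M - k' div M)" by (simp add: algebra_simps)
  moreover have "\<bar>M*(k div M - k' div M)\<bar> \<le> M*1" using assms by (simp add: abs_mult mult_left_mono)
  ultimately show ?thesis by linarith
qed

lemma abs_diff_greater_of_div_far:
  fixes k k' M :: int
  assumes "0 < M" "2 \<le> \<bar>k div M - k' div M\<bar>"
  shows "M < \<bar>k - k'\<bar>"
proof -
  have "k = M*(k div M) + k mod M" "k' = M*(k' div M) + k' mod M" by simp_all
  moreover have "0 \<le> k mod M" "k mod M < M" "0 \<le> k' mod M" "k' mod M < M" using assms by simp_all
  moreover have "M*(k div M) - M*(k' div M) = M*(k div M - k' div M)" by (simp add: algebra_simps)
  moreover have "M*2 \<le> \<bar>M*(k div M - k' div M)\<bar>" using assms by (simp add: abs_mult mult_left_mono)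
  ultimately show ?thesis by linarith
qed

lemma dsim_index_gap:
  assumes "dsim (Suc n) \<tau> \<tau>'"
  obtains k k' j where "\<tau> = dint k j" "\<tau>' = dint k' j" "2^n < \<bar>k - k'\<bar>" "\<bar>k - k'\<bar> < 4*2^n"
proof -
  obtain k k' j where \<tau>: "\<tau> = dint k j" "\<tau>' = dint k' j"
    and near: "\<not> adjacent (dparent n k j) (dparent n k' j)"
    and adj: "adjacent (dparent (Suc n) k j) (dparent (Suc n) k' j)"
    using assms unfolding dsim_def by blast
  have adj': "\<bar>k div 2^Suc n - k' div 2^Suc n\<bar> = 1" using adj unfolding dparent_def adjacent_dint_iff .
  have "\<bar>k div 2^n - k' div 2^n\<bar> \<noteq> 1" using near unfolding dparent_def adjacent_dint_iff .
  moreover have "k div 2^n \<noteq> k' div 2^n"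
  proof
    assume "k div 2^n = k' div 2^n"
    moreover have "x div 2^Suc n = x div 2^n div 2" for x :: int
      unfolding power_Suc2 by (rule zdiv_zmult2_eq) simp
    ultimately have "k div 2^Suc n = k' div 2^Suc n" by simp
    then show False using adj' by simp
  qed
  ultimately have "2 \<le> \<bar>k div 2^n - k' div 2^n\<bar>" by linarith
  then have "2^n < \<bar>k - k'\<bar>" by (intro abs_diff_greater_of_div_far) simp_all
  moreover have "\<bar>k - k'\<bar> < 4*2^n" using abs_diff_less_of_div_near[of "2^Suc n" k k'] adj' by simp
  ultimately show thesis using that \<tau> by blast
qed

lemma dint_nonneg:
  assumes "dint k j \<subseteq> {0..}"
  shows "0 \<le> k"
proof -
  have "of_int k * 2 powr of_int j \<in> dint k j" unfolding dint_def by simp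
  then have "0 \<le> of_int k * (2::real) powr of_int j" using assms by auto
  then show ?thesis by (simp add: zero_le_mult_iff)
qed

lemma msum_dint:
  "msum (dint k j) (dint k' j) = {of_int (k+k') * 2 powr of_int j ..< (of_int (k+k') + 2) * 2 powr of_int j}"
  (is "_ = {?a ..< ?b}")
proof
  let ?h = "(2::real) powr of_int j"
  show "msum (dint k j) (dint k' j) \<subseteq> {?a..<?b}"
    unfolding msum_def dint_def by (auto simp: algebra_simps)
  show "{?a..<?b} \<subseteq> msum (dint k j) (dint k' j)"
  proof
    fix x assume x: "x \<in> {?a..<?b}"
    define e where "e = (x - ?a)/2"
    have e: "0 \<le> e" "e < ?h" using x unfolding e_def by (auto simp: algebra_simps)
    have "of_int k * ?h + e \<in> dint k j" "of_int k' * ?h + e \<in> dint k' j"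
      unfolding dint_def using e by (auto simp: algebra_simps)
    moreover have "x = (of_int k * ?h + e) + (of_int k' * ?h + e)" unfolding e_def by (simp add: algebra_simps)
    ultimately show "x \<in> msum (dint k j) (dint k' j)" unfolding msum_def by blast
  qed
qed

section \<open>The parallelograms\<close>

definition sep_scale :: "nat \<Rightarrow> real" where
  "sep_scale l = 2^(l+5)"

lemma sep_scale_bounds:
  assumes "2 \<le> l"
  shows "4*real l \<le> sep_scale l" "1024*4^l \<le> (sep_scale l)^2"
proof -
  have "real l \<le> 2^l" using less_exp[of l] by (metis less_imp_le of_nat_le_iff of_nat_numeral of_nat_power)
  moreover have "(2::real)^(l+5) = 32*2^l" by (simp add: power_add)
  ultimately show "4*real l \<le> sep_scale l" unfolding sep_scale_def by linarith
  have "(2::real)^(l+5) * 2^(l+5) = 1024 * (2^l*2^l)" by (simp add: power_add)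
  also have "(2::real)^l*2^l = 4^l" by (simp add: power_mult_distrib[symmetric])
  finally show "1024*4^l \<le> (sep_scale l)^2" unfolding sep_scale_def by (simp add: power2_eq_square)
qed

definition half_len :: "real set \<Rightarrow> real" where
  "half_len J = (Sup J - Inf J)/2"

definition midpt :: "real set \<Rightarrow> real" where
  "midpt J = (Inf J + Sup J)/2"

definition flatness :: "nat \<Rightarrow> real set \<Rightarrow> real" where
  "flatness l J = (sep_scale l * (half_len J / midpt J))^2"

text \<open>The parallelogram \<open>R(J)\<close> consists of the points over \<open>J\<close> whose \<open>tangent_dev\<close> at the
  midpoint lies between \<open>Q/32\<close> and \<open>101 \<cdot> 4^l Q\<close>, where \<open>Q = flatness l J\<close>. The fallback edges
  for degenerate \<open>J\<close>, which never arise as \<open>\<tau> + \<tau>'\<close>, only serve to keep \<open>R(J)\<close> nondegenerate.\<close>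

definition para_center :: "nat \<Rightarrow> real set \<Rightarrow> real \<times> real" where
  "para_center l J =
     (midpt J, diag_curve l (midpt J) * (1 + (flatness l J/32 + 101*4^l*flatness l J)/2))"

definition para_u :: "nat \<Rightarrow> real set \<Rightarrow> real \<times> real" where
  "para_u l J = (if 0 < half_len J \<and> 0 < midpt J
     then (half_len J, diag_curve l (midpt J) * real l * (half_len J / midpt J)) else (1, 0))"

definition para_v :: "nat \<Rightarrow> real set \<Rightarrow> real \<times> real" where
  "para_v l J = (if 0 < half_len J \<and> 0 < midpt J
     then (0, diag_curve l (midpt J) * ((101*4^l*flatness l J - flatness l J/32)/2)) else (0, 1))"

lemma half_len_midpt_msum_dint:
  "half_len (msum (dint k j) (dint k' j)) = 2 powr of_int j"
  "midpt (msum (dint k j) (dint k' j)) = (of_int (k+k') + 1) * 2 powr of_int j"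
proof -
  have "of_int (k+k') * 2 powr of_int j < (of_int (k+k') + 2) * (2::real) powr of_int j"
    by (simp add: algebra_simps)
  then have "Inf (msum (dint k j) (dint k' j)) = of_int (k+k') * 2 powr of_int j"
    "Sup (msum (dint k j) (dint k' j)) = (of_int (k+k') + 2) * 2 powr of_int j"
    unfolding msum_dint by simp_all
  then show "half_len (msum (dint k j) (dint k' j)) = 2 powr of_int j"
    "midpt (msum (dint k j) (dint k' j)) = (of_int (k+k') + 1) * 2 powr of_int j"
    unfolding half_len_def midpt_def by (simp_all add: algebra_simps)
qed

lemma flatness_pos:
  assumes "0 < half_len J" "0 < midpt J"
  shows "0 < flatness l J" "flatness l J/32 < 101*4^l*flatness l J"
proof -
  show Q: "0 < flatness l J" using assms unfolding flatness_def sep_scale_def by simp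
  have "(1::real) \<le> 4^l" by simp
  then have "1*flatness l J \<le> 4^l*flatness l J" using Q by (intro mult_right_mono) auto
  then show "flatness l J/32 < 101*4^l*flatness l J" using Q by linarith
qed

lemma nondeg_para: "nondeg (para_u l J) (para_v l J)"
proof (cases "0 < half_len J \<and> 0 < midpt J")
  case True
  then have "0 < diag_curve l (midpt J)" unfolding diag_curve_def by simp
  moreover have "flatness l J/32 < 101*4^l*flatness l J" using flatness_pos(2)[of J l] True by blast
  then have "0 < (101*4^l*flatness l J - flatness l J/32)/2" by simp
  ultimately have "0 < half_len J * (diag_curve l (midpt J) * ((101*4^l*flatness l J - flatness l J/32)/2))"
    using True by (intro mult_pos_pos) auto
  moreover have "fst (para_u l J) * snd (para_v l J) - snd (para_u l J) * fst (para_v l J) =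
      half_len J * (diag_curve l (midpt J) * ((101*4^l*flatness l J - flatness l J/32)/2))"
    using True unfolding para_u_def para_v_def by simp
  ultimately show ?thesis unfolding nondeg_def by (metis less_irrefl)
next
  case False
  then show ?thesis unfolding nondeg_def para_u_def para_v_def if_not_P[OF False] by simp
qed

lemma mem_dil_para_iff:
  fixes l :: nat and p :: "real \<times> real"
  assumes J: "0 < half_len J" "0 < midpt J" and "0 \<le> \<beta>"
  defines "Q \<equiv> flatness l J"
  shows "p \<in> dil_pgram \<beta> (para_center l J) (para_u l J) (para_v l J) \<longleftrightarrow>
    \<bar>fst p - midpt J\<bar> \<le> (1+\<beta>)*half_len J \<and>
    \<bar>tangent_dev l (midpt J) p - (Q/32 + 101*4^l*Q)/2\<bar> \<le> (1+\<beta>)*((101*4^l*Q - Q/32)/2)"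
proof -
  obtain x y where p: "p = (x, y)" by fastforce
  define h c G M H where "h = half_len J" and "c = midpt J" and "G = diag_curve l c"
    and "M = (Q/32 + 101*4^l*Q)/2" and "H = (101*4^l*Q - Q/32)/2"
  have G0: "0 < G" using J unfolding G_def c_def diag_curve_def by simp
  have H0: "0 < H" using flatness_pos[OF J] unfolding H_def Q_def by simp
  have "p \<in> dil_pgram \<beta> (para_center l J) (para_u l J) (para_v l J) \<longleftrightarrow>
    (x, y) \<in> pgram (c, G*(1+M)) ((1+\<beta>)*h, (1+\<beta>)*(G*real l*(h/c))) (0, (1+\<beta>)*(G*H))"
    using J unfolding p dil_pgram_def para_center_def para_u_def para_v_def h_def c_def G_def M_def H_def Q_def
    by simp
  also have "\<dots> \<longleftrightarrow> \<bar>x - c\<bar> \<le> (1+\<beta>)*h \<and> \<bar>G*(tangent_dev l c (x, y) - M)\<bar> \<le> (1+\<beta>)*(G*H)"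
  proof -
    have "(1+\<beta>)*(G*real l*(h/c))*(x - c) = ((1+\<beta>)*h) * (G*(real l*((x - c)/c)))"
      by (simp add: algebra_simps)
    moreover have "(1+\<beta>)*h \<noteq> 0" using J \<open>0 \<le> \<beta>\<close> unfolding h_def by simp
    ultimately have "(1+\<beta>)*(G*real l*(h/c))*(x - c)/((1+\<beta>)*h) = G*(real l*((x - c)/c))" by simp
    moreover have "G*(tangent_dev l c (x, y) - M) = G*(y/G) - G - G*(real l*((x - c)/c)) - G*M"
      unfolding tangent_dev_def G_def by (simp add: algebra_simps)
    ultimately have "y - G*(1+M) - (1+\<beta>)*(G*real l*(h/c))*(x - c)/((1+\<beta>)*h) = G*(tangent_dev l c (x, y) - M)"
      using G0 by (simp add: algebra_simps)
    then show ?thesis using J G0 H0 \<open>0 \<le> \<beta>\<close> unfolding h_def by (subst mem_shear_pgram) auto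
  qed
  also have "\<dots> \<longleftrightarrow> \<bar>x - c\<bar> \<le> (1+\<beta>)*h \<and> \<bar>tangent_dev l c (x, y) - M\<bar> \<le> (1+\<beta>)*H"
    using G0 by (simp add: abs_mult)
  finally show ?thesis unfolding p h_def c_def M_def H_def by simp
qed

lemma msum_dint_shape:
  fixes k k' j :: int
  assumes "0 \<le> k" "0 \<le> k'" "sep_scale l \<le> \<bar>of_int k - of_int k'\<bar>"
  defines "J \<equiv> msum (dint k j) (dint k' j)"
  shows "0 < half_len J" "0 < midpt J" "half_len J / midpt J = 1/(of_int k + of_int k' + 1)"
    "sep_scale l * (half_len J / midpt J) \<le> 1" "4*half_len J \<le> midpt J"
proof -
  have P: "32 \<le> sep_scale l" unfolding sep_scale_def by (simp add: power_add)
  define s where "s = real_of_int k + of_int k'"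
  have s: "sep_scale l \<le> s" using assms(1-3) unfolding s_def by linarith
  have h: "half_len J = 2 powr of_int j" "midpt J = (s + 1) * 2 powr of_int j"
    using half_len_midpt_msum_dint unfolding J_def s_def by simp_all
  show "0 < half_len J" "0 < midpt J" using h s P by simp_all
  show q: "half_len J / midpt J = 1/(of_int k + of_int k' + 1)" using h s P unfolding s_def by simp
  have "sep_scale l * (1/(s + 1)) \<le> 1" using s P by simp
  then show "sep_scale l * (half_len J / midpt J) \<le> 1" using q unfolding s_def by simp
  have "4 \<le> s + 1" using s P by linarith
  then show "4*half_len J \<le> midpt J" unfolding h by (intro mult_right_mono) simp_all
qed

lemma Sl_subset_para:
  fixes k k' j :: int
  assumes l: "2 \<le> l" and k: "0 \<le> k" "0 \<le> k'"
    and sep: "sep_scale l \<le> \<bar>of_int k - of_int k'\<bar>" "\<bar>of_int k - of_int k'\<bar> \<le> 4 * sep_scale l"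
  defines "J \<equiv> msum (dint k j) (dint k' j)"
  shows "Sl l (dint k j) (dint k' j) \<subseteq> pgram (para_center l J) (para_u l J) (para_v l J)"
proof
  fix p assume "p \<in> Sl l (dint k j) (dint k' j)"
  then obtain \<xi> \<xi>' where p: "p = (\<xi> + \<xi>', \<xi>^l + \<xi>'^l)" and "\<xi> \<in> dint k j" "\<xi>' \<in> dint k' j"
    unfolding Sl_def by blast
  then have \<xi>: "of_int k * 2 powr of_int j \<le> \<xi>" "\<xi> \<le> (of_int k + 1) * 2 powr of_int j"
    "of_int k' * 2 powr of_int j \<le> \<xi>'" "\<xi>' \<le> (of_int k' + 1) * 2 powr of_int j"
    unfolding dint_def by auto
  note shape = msum_dint_shape[OF k sep(1), of j, folded J_def]
  have J: "midpt J = (of_int k + of_int k' + 1) * 2 powr of_int j" "half_len J = 2 powr of_int j"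
    "flatness l J = (sep_scale l * (1/(of_int k + of_int k' + 1)))^2"
    using half_len_midpt_msum_dint unfolding flatness_def shape(3) unfolding J_def by simp_all
  have "(0::real) < 2 powr of_int j" by simp
  note bounds = tangent_dev_curve_bounds[OF l sep_scale_bounds[OF l] this
      k(1)[THEN of_int_nonneg] k(2)[THEN of_int_nonneg] sep \<xi>]
  have "\<bar>fst p - midpt J\<bar> \<le> half_len J"
    "flatness l J/32 \<le> tangent_dev l (midpt J) p" "tangent_dev l (midpt J) p \<le> 101*4^l*flatness l J"
    unfolding J p using bounds by simp_all
  then have "p \<in> dil_pgram 0 (para_center l J) (para_u l J) (para_v l J)"
    using mem_dil_para_iff[OF shape(1,2), of 0] by (simp add: abs_le_iff field_simps)
  then show "p \<in> pgram (para_center l J) (para_u l J) (para_v l J)" unfolding dil_pgram_def by simp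
qed

definition dil_factor :: "nat \<Rightarrow> real" where
  "dil_factor l = 1/(8000*4^l)"

lemma dil_para_gap_bounds:
  fixes k k' j :: int
  assumes l: "2 \<le> l" and k: "0 \<le> k" "0 \<le> k'" and sep: "sep_scale l \<le> \<bar>of_int k - of_int k'\<bar>"
  defines "J \<equiv> msum (dint k j) (dint k' j)"
  assumes p: "p \<in> dil_pgram (dil_factor l) (para_center l J) (para_u l J) (para_v l J)"
  shows "\<bar>fst p - midpt J\<bar> \<le> 2*half_len J" "0 < fst p"
    "flatness l J/128 * diag_curve l (fst p) \<le> snd p - diag_curve l (fst p)"
    "snd p - diag_curve l (fst p) \<le> 204*4^l*flatness l J * diag_curve l (fst p)"
proof -
  note shape = msum_dint_shape[OF k sep, of j, folded J_def]
  have "(1::real) \<le> 8000*4^l" using one_le_power[of "4::real" l] by linarith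
  then have \<beta>: "0 \<le> dil_factor l" "dil_factor l \<le> 1" unfolding dil_factor_def by simp_all
  have x: "\<bar>fst p - midpt J\<bar> \<le> (1 + dil_factor l)*half_len J"
    and dev: "\<bar>tangent_dev l (midpt J) p - (flatness l J/32 + 101*4^l*flatness l J)/2\<bar>
       \<le> (1 + dil_factor l)*((101*4^l*flatness l J - flatness l J/32)/2)"
    using mem_dil_para_iff[OF shape(1,2) \<beta>(1)] p by auto
  have "(1 + dil_factor l)*half_len J \<le> 2*half_len J" using \<beta> shape(1) by (intro mult_right_mono) auto
  then show "\<bar>fst p - midpt J\<bar> \<le> 2*half_len J" using x by linarith
  note gap = gap_above_curve_bounds[OF l sep_scale_bounds[OF l] shape(2,1,4) \<beta>(1) _ x,
      of "snd p", folded flatness_def]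
  show "0 < fst p" "flatness l J/128 * diag_curve l (fst p) \<le> snd p - diag_curve l (fst p)"
    "snd p - diag_curve l (fst p) \<le> 204*4^l*flatness l J * diag_curve l (fst p)"
    using gap dev unfolding dil_factor_def by simp_all
qed

section \<open>Counting overlapping parallelograms\<close>

lemma half_len_comparable:
  fixes c h c1 h1 x :: real
  assumes c: "0 < c" "0 < c1" and h: "0 < h1" "4*h \<le> c" "4*h1 \<le> c1"
    and x: "\<bar>x - c\<bar> \<le> 2*h" "\<bar>x - c1\<bar> \<le> 2*h1"
    and ratio: "(h/c)^2 \<le> 26112*4^l*(h1/c1)^2"
  shows "h \<le> 2^(l+10)*h1"
proof -
  have "((2::real)^(l+8))^2 = 2^(2*l+16)" by (simp add: power_mult[symmetric] algebra_simps)
  also have "\<dots> = 65536*4^l" by (simp add: power_add power_mult)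
  finally have e: "((2::real)^(l+8))^2 = 65536*4^l" .
  have "26112*4^l*(h1/c1)^2 \<le> 65536*4^l*(h1/c1)^2" by (rule mult_right_mono) simp_all
  then have "(h/c)^2 \<le> (2^(l+8)*(h1/c1))^2" using ratio unfolding power_mult_distrib e by linarith
  then have "h/c \<le> 2^(l+8)*(h1/c1)" by (rule power2_le_imp_le) (use h c in simp)
  moreover have "c \<le> 3*c1" using x h unfolding abs_le_iff by linarith
  ultimately have "h/c*c \<le> 2^(l+8)*(h1/c1)*(3*c1)" using c h by (intro mult_mono) simp_all
  moreover have "h/c*c = h" "2^(l+8)*(h1/c1)*(3*c1) = 3*2^(l+8)*h1" using c by simp_all
  ultimately have "h \<le> 3*2^(l+8)*h1" by linarith
  also have "\<dots> \<le> 4*2^(l+8)*h1" using h by (intro mult_right_mono) simp_all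
  also have "\<dots> = 2^(l+10)*h1" by (simp add: power_add)
  finally show ?thesis .
qed

lemma overlap_half_len_le:
  fixes k k' j k1 k1' j1 :: int
  assumes l: "2 \<le> l" and k: "0 \<le> k" "0 \<le> k'" "sep_scale l \<le> \<bar>of_int k - of_int k'\<bar>"
    and k1: "0 \<le> k1" "0 \<le> k1'" "sep_scale l \<le> \<bar>of_int k1 - of_int k1'\<bar>"
  defines "J \<equiv> msum (dint k j) (dint k' j)" and "J1 \<equiv> msum (dint k1 j1) (dint k1' j1)"
  assumes p: "p \<in> dil_pgram (dil_factor l) (para_center l J) (para_u l J) (para_v l J)"
    "p \<in> dil_pgram (dil_factor l) (para_center l J1) (para_u l J1) (para_v l J1)"
  shows "half_len J \<le> 2^(l+10) * half_len J1"
proof -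
  note A = dil_para_gap_bounds[OF l k, where j=j, folded J_def, OF p(1)]
  note B = dil_para_gap_bounds[OF l k1, where j=j1, folded J1_def, OF p(2)]
  note sA = msum_dint_shape[OF k, where j=j, folded J_def]
  note sB = msum_dint_shape[OF k1, where j=j1, folded J1_def]
  have "flatness l J/128 * diag_curve l (fst p) \<le> 204*4^l*flatness l J1 * diag_curve l (fst p)"
    using A(3) B(4) by linarith
  moreover have "0 < diag_curve l (fst p)" using A(2) unfolding diag_curve_def by simp
  ultimately have "flatness l J/128 \<le> 204*4^l*flatness l J1" by (rule mult_right_le_imp_le)
  then have "(sep_scale l)^2 * (half_len J / midpt J)^2 \<le> (sep_scale l)^2 * (26112*4^l*(half_len J1 / midpt J1)^2)"
    unfolding flatness_def power_mult_distrib by (simp add: ac_simps)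
  moreover have "0 < (sep_scale l)^2" unfolding sep_scale_def by simp
  ultimately have "(half_len J / midpt J)^2 \<le> 26112*4^l*(half_len J1 / midpt J1)^2"
    by (rule mult_left_le_imp_le)
  then show ?thesis by (rule half_len_comparable[OF sA(2) sB(2) sB(1) sA(5) sB(5) A(1) B(1)])
qed

lemma exponent_le_of_powr_le:
  fixes j j1 :: int
  assumes "(2::real) powr of_int j \<le> 2^n * 2 powr of_int j1"
  shows "j \<le> j1 + int n"
proof -
  have "(2::real)^n = 2 powr real n" by (simp add: powr_realpow)
  then have "(2::real) powr of_int j \<le> 2 powr (real n + of_int j1)" using assms by (simp add: powr_add)
  then show ?thesis by simp
qed

lemma index_near_center:
  fixes P h1 c c1 k1 k1' x h :: real
  assumes h1: "0 < h1" and c1: "c1 = (k1 + k1' + 1)*h1" and k1: "\<bar>k1 - k1'\<bar> \<le> 4*P"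
    and x: "\<bar>x - c\<bar> \<le> 2*h" "\<bar>x - c1\<bar> \<le> 2*h1" and h: "h \<le> 2^(l+10)*h1"
  shows "\<bar>k1 - c/(2*h1)\<bar> \<le> 2*P + 2^(l+11)"
proof -
  have pow: "(2::real)^(l+11) = 2*2^(l+10)" "(2::real)^11 \<le> 2^(l+11)" by (simp_all add: power_add)
  have "2^(l+11)*h1 = 2*(2^(l+10)*h1)" unfolding pow(1) by simp
  then have "\<bar>c - c1\<bar> \<le> 2^(l+11)*h1 + 2*h1" using x h unfolding abs_le_iff by linarith
  moreover have "\<bar>(k1 - k1' - 1)*h1\<bar> \<le> (4*P + 1)*h1"
  proof -
    have "\<bar>(k1 - k1' - 1)*h1\<bar> = \<bar>k1 - k1' - 1\<bar>*h1" using h1 by (simp add: abs_mult)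
    also have "\<dots> \<le> (4*P + 1)*h1" using k1 h1 by (intro mult_right_mono) auto
    finally show ?thesis .
  qed
  moreover have "2*k1*h1 - c = (k1 - k1' - 1)*h1 + (c1 - c)" unfolding c1 by (simp add: algebra_simps)
  ultimately have "\<bar>2*k1*h1 - c\<bar> \<le> (4*P + 1)*h1 + (2^(l+11)*h1 + 2*h1)"
    using abs_triangle_ineq[of "(k1 - k1' - 1)*h1" "c1 - c"] by (simp add: abs_minus_commute)
  also have "\<dots> \<le> (2*P + 2^(l+11))*(2*h1)" using pow(2) h1 by (simp add: algebra_simps)
  finally have "\<bar>2*k1*h1 - c\<bar>/(2*h1) \<le> 2*P + 2^(l+11)" using h1 by (simp add: divide_le_eq)
  moreover have "k1 - c/(2*h1) = (2*k1*h1 - c)/(2*h1)" using h1 by (simp add: field_simps)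
  ultimately show ?thesis using h1 by (simp add: abs_div)
qed

lemma dsim_sep_scale:
  assumes "dsim (l+6) \<tau> \<tau>'" "\<tau> \<subseteq> {0..}" "\<tau>' \<subseteq> {0..}"
  obtains k k' j where "\<tau> = dint k j" "\<tau>' = dint k' j" "0 \<le> k" "0 \<le> k'"
    "sep_scale l \<le> \<bar>of_int k - of_int k'\<bar>" "\<bar>of_int k - of_int k'\<bar> \<le> 4 * sep_scale l"
proof -
  have "dsim (Suc (l+5)) \<tau> \<tau>'" using assms(1) by (simp add: add.commute)
  then obtain k k' j where \<tau>: "\<tau> = dint k j" "\<tau>' = dint k' j"
    and gap: "2^(l+5) < \<bar>k - k'\<bar>" "\<bar>k - k'\<bar> < 4*2^(l+5)"
    by (rule dsim_index_gap)
  have "real_of_int (2^(l+5)) < of_int \<bar>k - k'\<bar>" "of_int \<bar>k - k'\<bar> < real_of_int (4*2^(l+5))"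
    using gap by (simp_all only: of_int_less_iff)
  then have "sep_scale l \<le> \<bar>of_int k - of_int k'\<bar>" "\<bar>of_int k - of_int k'\<bar> \<le> 4 * sep_scale l"
    unfolding sep_scale_def by simp_all
  moreover have "0 \<le> k" "0 \<le> k'" using dint_nonneg assms(2,3) \<tau> by auto
  ultimately show thesis using that \<tau> by blast
qed

lemma dsim_Sl_subset_para:
  assumes "2 \<le> l" "dsim (l+6) \<tau> \<tau>'" "\<tau> \<subseteq> {0..}" "\<tau>' \<subseteq> {0..}"
  shows "Sl l \<tau> \<tau>' \<subseteq> pgram (para_center l (msum \<tau> \<tau>')) (para_u l (msum \<tau> \<tau>')) (para_v l (msum \<tau> \<tau>'))"
proof -
  obtain k k' j where "\<tau> = dint k j" "\<tau>' = dint k' j" "0 \<le> k" "0 \<le> k'"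
    "sep_scale l \<le> \<bar>of_int k - of_int k'\<bar>" "\<bar>of_int k - of_int k'\<bar> \<le> 4 * sep_scale l"
    using dsim_sep_scale[OF assms(2-4)] by blast
  then show ?thesis using Sl_subset_para[OF assms(1)] by blast
qed

definition para_overlaps :: "nat \<Rightarrow> real set \<Rightarrow> real set \<Rightarrow> (real set \<times> real set) set" where
  "para_overlaps l \<tau> \<tau>' = {(\<tau>1, \<tau>1'). dsim (l+6) \<tau>1 \<tau>1' \<and> \<tau>1 \<subseteq> {0..} \<and> \<tau>1' \<subseteq> {0..} \<and>
     dil_pgram (dil_factor l) (para_center l (msum \<tau> \<tau>')) (para_u l (msum \<tau> \<tau>')) (para_v l (msum \<tau> \<tau>')) \<inter>
     dil_pgram (dil_factor l) (para_center l (msum \<tau>1 \<tau>1')) (para_u l (msum \<tau>1 \<tau>1')) (para_v l (msum \<tau>1 \<tau>1'))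
       \<noteq> {}}"

definition index_radius :: "nat \<Rightarrow> int" where
  "index_radius l = 2^(l+6) + 2^(l+11)"

lemma floor_diff_mem_window:
  fixes k R :: int and t :: real
  assumes "\<bar>of_int k - t\<bar> \<le> of_int R"
  shows "k - \<lfloor>t\<rfloor> \<in> {-(R+1)..R+1}"
  using assms floor_le_iff[of t] le_floor_iff[of _ t] unfolding abs_le_iff by auto linarith+

lemma overlap_in_window:
  fixes k k' j :: int
  assumes l: "2 \<le> l" and k: "0 \<le> k" "0 \<le> k'" "sep_scale l \<le> \<bar>of_int k - of_int k'\<bar>"
    and overlap: "(\<tau>1, \<tau>1') \<in> para_overlaps l (dint k j) (dint k' j)"
  defines "c \<equiv> midpt (msum (dint k j) (dint k' j))" and "R \<equiv> index_radius l"
  obtains i r r' where "i \<in> {-(int l + 10)..int l + 10}" "r \<in> {-(R+1)..R+1}" "r' \<in> {-(R+1)..R+1}"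
    "\<tau>1 = dint (\<lfloor>c/(2 * 2 powr of_int (j+i))\<rfloor> + r) (j+i)"
    "\<tau>1' = dint (\<lfloor>c/(2 * 2 powr of_int (j+i))\<rfloor> + r') (j+i)"
proof -
  define J where "J = msum (dint k j) (dint k' j)"
  have "dsim (l+6) \<tau>1 \<tau>1'" "\<tau>1 \<subseteq> {0..}" "\<tau>1' \<subseteq> {0..}" using overlap unfolding para_overlaps_def by auto
  then obtain k1 k1' j1 where \<tau>1: "\<tau>1 = dint k1 j1" "\<tau>1' = dint k1' j1"
    and k1: "0 \<le> k1" "0 \<le> k1'" "sep_scale l \<le> \<bar>of_int k1 - of_int k1'\<bar>"
    and k1': "\<bar>of_int k1 - of_int k1'\<bar> \<le> 4 * sep_scale l"
    by (rule dsim_sep_scale)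
  define J1 where "J1 = msum (dint k1 j1) (dint k1' j1)"
  obtain p where p: "p \<in> dil_pgram (dil_factor l) (para_center l J) (para_u l J) (para_v l J)"
    "p \<in> dil_pgram (dil_factor l) (para_center l J1) (para_u l J1) (para_v l J1)"
    using overlap unfolding para_overlaps_def J_def J1_def \<tau>1 by blast
  have hJ: "half_len J = 2 powr of_int j" "half_len J1 = 2 powr of_int j1"
    and c1: "midpt J1 = (of_int k1 + of_int k1' + 1) * 2 powr of_int j1"
    using half_len_midpt_msum_dint unfolding J_def J1_def by simp_all
  have "2 powr of_int j \<le> 2^(l+10) * (2::real) powr of_int j1"
    using overlap_half_len_le[OF l k k1 p[unfolded J_def J1_def]] hJ unfolding J_def J1_def by simp
  moreover have "2 powr of_int j1 \<le> 2^(l+10) * (2::real) powr of_int j"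
    using overlap_half_len_le[OF l k1 k p(2,1)[unfolded J_def J1_def]] hJ unfolding J_def J1_def by simp
  ultimately have hh: "2 powr of_int j \<le> 2^(l+10) * (2::real) powr of_int j1"
    and "j \<le> j1 + int (l+10)" "j1 \<le> j + int (l+10)" using exponent_le_of_powr_le by blast+
  then have i: "j1 - j \<in> {-(int l + 10)..int l + 10}" by simp
  have x: "\<bar>fst p - c\<bar> \<le> 2 * 2 powr of_int j" "\<bar>fst p - midpt J1\<bar> \<le> 2 * 2 powr of_int j1"
    using dil_para_gap_bounds(1)[OF l k p(1)[unfolded J_def]] dil_para_gap_bounds(1)[OF l k1 p(2)[unfolded J1_def]]
      hJ unfolding c_def J_def J1_def by simp_all
  have "(0::real) < 2 powr of_int j1" by simp
  note near = index_near_center[OF this _ _ x hh]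
  have "real_of_int R = 2 * sep_scale l + 2^(l+11)"
    unfolding R_def index_radius_def sep_scale_def by (simp add: power_add)
  then have "\<bar>of_int k1 - c/(2 * 2 powr of_int j1)\<bar> \<le> of_int R"
    "\<bar>of_int k1' - c/(2 * 2 powr of_int j1)\<bar> \<le> of_int R"
    using near[of k1 k1' "sep_scale l"] near[of k1' k1 "sep_scale l"] c1 k1' by (simp_all add: ac_simps abs_minus_commute)
  then show thesis using that[OF i floor_diff_mem_window floor_diff_mem_window] \<tau>1 by simp
qed

definition overlap_bound :: "nat \<Rightarrow> nat" where
  "overlap_bound l = (2*l + 21) * nat (2 * index_radius l + 3)^2"

lemma para_overlaps_card:
  assumes l: "2 \<le> l" and "dsim (l+6) \<tau> \<tau>'" "\<tau> \<subseteq> {0..}" "\<tau>' \<subseteq> {0..}"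
  shows "finite (para_overlaps l \<tau> \<tau>') \<and> card (para_overlaps l \<tau> \<tau>') \<le> overlap_bound l"
proof -
  obtain k k' j where \<tau>: "\<tau> = dint k j" "\<tau>' = dint k' j"
    and k: "0 \<le> k" "0 \<le> k'" "sep_scale l \<le> \<bar>of_int k - of_int k'\<bar>"
    using dsim_sep_scale assms(2-4) by metis
  define c where "c = midpt (msum (dint k j) (dint k' j))"
  define R where "R = index_radius l"
  define S where "S = {-(int l + 10)..int l + 10} \<times> {-(R+1)..R+1} \<times> {-(R+1)..R+1}"
  define f where "f = (\<lambda>(i, r, r'). let a = \<lfloor>c/(2 * 2 powr of_int (j+i))\<rfloor> in (dint (a + r) (j+i), dint (a + r') (j+i)))"
  have sub: "para_overlaps l \<tau> \<tau>' \<subseteq> f ` S"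
  proof
    fix q assume "q \<in> para_overlaps l \<tau> \<tau>'"
    moreover obtain \<tau>1 \<tau>1' where q: "q = (\<tau>1, \<tau>1')" by fastforce
    ultimately have "(\<tau>1, \<tau>1') \<in> para_overlaps l (dint k j) (dint k' j)" unfolding \<tau> by simp
    then obtain i r r' where "i \<in> {-(int l + 10)..int l + 10}" "r \<in> {-(R+1)..R+1}" "r' \<in> {-(R+1)..R+1}"
      "\<tau>1 = dint (\<lfloor>c/(2 * 2 powr of_int (j+i))\<rfloor> + r) (j+i)"
      "\<tau>1' = dint (\<lfloor>c/(2 * 2 powr of_int (j+i))\<rfloor> + r') (j+i)"
      by (rule overlap_in_window[OF l k, where j=j, folded c_def R_def])
    then have "(i, r, r') \<in> S" "q = f (i, r, r')" unfolding S_def f_def q by (simp_all add: Let_def)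
    then show "q \<in> f ` S" by blast
  qed
  have S: "finite S" unfolding S_def by simp
  have "card S = overlap_bound l"
  proof -
    have "0 \<le> R" unfolding R_def index_radius_def by simp
    then have "card S = (2*l + 21) * (nat (2*R + 3) * nat (2*R + 3))"
      unfolding S_def by (simp add: card_cartesian_product nat_add_distrib nat_mult_distrib add.commute)
    then show ?thesis unfolding overlap_bound_def R_def by (simp add: power2_eq_square)
  qed
  moreover have "card (para_overlaps l \<tau> \<tau>') \<le> card (f ` S)" using S sub by (simp add: card_mono)
  moreover have "card (f ` S) \<le> card S" using S by (rule card_image_le)
  ultimately show ?thesis using S sub finite_subset by auto
qed

theorem mainTheorem11:
  fixes l :: nat
  assumes "l > 1" and "odd l"
  shows "\<exists>N::nat. \<exists>Rc Ru Rv :: real set \<Rightarrow> real \<times> real.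
     (\<forall>J. nondeg (Ru J) (Rv J)) \<and>
     (\<forall>\<tau> \<tau>'. dsim N \<tau> \<tau>' \<and> \<tau> \<subseteq> {0..} \<and> \<tau>' \<subseteq> {0..} \<longrightarrow>
        Sl l \<tau> \<tau>' \<subseteq> pgram (Rc (msum \<tau> \<tau>')) (Ru (msum \<tau> \<tau>')) (Rv (msum \<tau> \<tau>'))) \<and>
     (\<exists>\<beta>>0. \<exists>C::nat. \<forall>\<tau> \<tau>'. dsim N \<tau> \<tau>' \<and> \<tau> \<subseteq> {0..} \<and> \<tau>' \<subseteq> {0..} \<longrightarrow>
        (let P = {(\<tau>1, \<tau>1'). dsim N \<tau>1 \<tau>1' \<and> \<tau>1 \<subseteq> {0..} \<and> \<tau>1' \<subseteq> {0..} \<and>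
                  dil_pgram \<beta> (Rc (msum \<tau> \<tau>')) (Ru (msum \<tau> \<tau>')) (Rv (msum \<tau> \<tau>')) \<inter>
                  dil_pgram \<beta> (Rc (msum \<tau>1 \<tau>1')) (Ru (msum \<tau>1 \<tau>1')) (Rv (msum \<tau>1 \<tau>1')) \<noteq> {}}
         in finite P \<and> card P \<le> C))"
proof -
  have l: "2 \<le> l" using assms(1) by simp
  have counted: "\<forall>\<tau> \<tau>'. dsim (l+6) \<tau> \<tau>' \<and> \<tau> \<subseteq> {0..} \<and> \<tau>' \<subseteq> {0..} \<longrightarrow>
      (let P = para_overlaps l \<tau> \<tau>' in finite P \<and> card P \<le> overlap_bound l)"
    using para_overlaps_card[OF l] by simp
  have dil: "0 < dil_factor l" unfolding dil_factor_def by simp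
  show ?thesis
    apply (rule exI[where x="l+6"], rule exI[where x="para_center l"], rule exI[where x="para_u l"],
        rule exI[where x="para_v l"])
    apply (intro conjI allI impI)
      apply (rule nondeg_para)
     apply (simp add: dsim_Sl_subset_para[OF l])
    apply (rule exI[where x="dil_factor l"], rule conjI[OF dil], rule exI[where x="overlap_bound l"])
    apply (rule counted[unfolded para_overlaps_def])
    done
qed

end
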